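(* Let $\widetilde\lambda:\widetilde C\to\widetilde C'$ be a morphism of $\mathcal S$-complexes over $R$, with irreducible component $\lambda:(C,d)\to(C',d')$ and reducible component $\rho:(\mathsf R,r)\to(\mathsf R',r')$. Suppose $\lambda$ is chain homotopic to an isomorphism of chain complexes and $\rho$ is chain homotopic to an isomorphism of chain complexes. Then $\widetilde\lambda$ is $\mathcal S$-chain homotopic to an isomorphism of $\mathcal S$-complexes.
   Context: Let $R$ be a commutative ring. Graded modules are $\mathbb Z$-graded; for a graded module $V$, $V[i]$ denotes the graded module with $V[i]_j=V_{i+j}$; differentials have degree $-1$. An $\mathcal S$-complex over $R$ is a chain complex $(\widetilde C,\widetilde d)$ of finitely generated free graded $R$-modules with a graded decomposition $\widetilde C=C\oplus C[-1]\oplus\mathsf R$ with respect to which $\widetilde d=\begin{pmatrix} d&0&0\\ v&-d&\delta_2\\ \delta_1&0&r\end{pmatrix}$. The chain complexes $(C,d)$ and $(\mathsf R,r)$ are the irreducible and reducible complexes. A morphism $\widetilde\lambda:\widetilde C\to\widetilde C'$ of $\mathcal S$-complexes is a degree $0$ chain map of the form $\begin{pmatrix}\lambda&0&0\\ \mu&\lambda&\Delta_2\\ \Delta_1&0&\rho\end{pmatrix}$; $\lambda$ is its irreducible component and $\rho$ its reducible component (these are chain maps $(C,d)\to(C',d')$ and $(\mathsf R,r)\to(\mathsf R',r')$). An $\mathcal S$-chain homotopy between morphisms $\widetilde\lambda,\widetilde\lambda'$ is a degree $1$ map $\widetilde K$ of the form $\begin{pmatrix}K&0&0\\ L&-K&M_2\\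 M_1&0&J\end{pmatrix}$ with $\widetilde d'\widetilde K+\widetilde K\widetilde d=\widetilde\lambda-\widetilde\lambda'$. An isomorphism of $\mathcal S$-complexes is a morphism which is bijective and whose inverse is a morphism. *)

theory Defs
  imports Main
begin

text \<open>
Finitely generated free graded R-modules are represented by a finite homogeneous
basis B together with a degree function deg on basis elements.
An R-linear map V -> W is represented by its matrix f :: 'j => 'i => 'a,
where f j i is the coefficient of the basis vector j of W in the image of the
basis vector i of V (entries vanish outside BW x BV).
\<close>

type_synonym 'i gmod = "'i set \<times> ('i \<Rightarrow> int)"

definition gbasis :: "'i gmod \<Rightarrow> 'i set" where "gbasis V = fst V"
definition gdeg :: "'i gmod \<Rightarrow> 'i \<Rightarrow> int" where "gdeg V = snd V"

definition free_gmod :: "'i gmod \<Rightarrow> bool" where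
  "free_gmod V \<longleftrightarrow> finite (gbasis V)"

definition zmat :: "'j \<Rightarrow> 'i \<Rightarrow> 'a::zero" where "zmat = (\<lambda>_ _. 0)"

definition mneg :: "('j \<Rightarrow> 'i \<Rightarrow> 'a::uminus) \<Rightarrow> 'j \<Rightarrow> 'i \<Rightarrow> 'a" where
  "mneg f = (\<lambda>j i. - f j i)"

definition mat_on :: "'j set \<Rightarrow> 'i set \<Rightarrow> ('j \<Rightarrow> 'i \<Rightarrow> 'a::zero) \<Rightarrow> bool" where
  "mat_on BW BV f \<longleftrightarrow> (\<forall>j i. f j i \<noteq> 0 \<longrightarrow> j \<in> BW \<and> i \<in> BV)"

definition hom_deg :: "('j \<Rightarrow> int) \<Rightarrow> ('i \<Rightarrow> int) \<Rightarrow> int \<Rightarrow> ('j \<Rightarrow> 'i \<Rightarrow> 'a::zero) \<Rightarrow> bool" where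
  "hom_deg dW dV k f \<longleftrightarrow> (\<forall>j i. f j i \<noteq> 0 \<longrightarrow> dW j = dV i + k)"

definition graded_map :: "'i gmod \<Rightarrow> 'j gmod \<Rightarrow> int \<Rightarrow> ('j \<Rightarrow> 'i \<Rightarrow> 'a::zero) \<Rightarrow> bool" where
  "graded_map V W k f \<longleftrightarrow> mat_on (gbasis W) (gbasis V) f \<and> hom_deg (gdeg W) (gdeg V) k f"

definition mcomp :: "'i set \<Rightarrow> ('k \<Rightarrow> 'i \<Rightarrow> 'a::comm_ring_1) \<Rightarrow> ('i \<Rightarrow> 'j \<Rightarrow> 'a) \<Rightarrow> 'k \<Rightarrow> 'j \<Rightarrow> 'a" where
  "mcomp B f g = (\<lambda>k j. \<Sum>i\<in>B. f k i * g i j)"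

definition mid :: "'i set \<Rightarrow> 'i \<Rightarrow> 'i \<Rightarrow> 'a::comm_ring_1" where
  "mid B = (\<lambda>j i. if i \<in> B \<and> j = i then 1 else 0)"

definition madd :: "('j \<Rightarrow> 'i \<Rightarrow> 'a::plus) \<Rightarrow> ('j \<Rightarrow> 'i \<Rightarrow> 'a) \<Rightarrow> 'j \<Rightarrow> 'i \<Rightarrow> 'a" where
  "madd f g = (\<lambda>j i. f j i + g j i)"

definition msub :: "('j \<Rightarrow> 'i \<Rightarrow> 'a::minus) \<Rightarrow> ('j \<Rightarrow> 'i \<Rightarrow> 'a) \<Rightarrow> 'j \<Rightarrow> 'i \<Rightarrow> 'a" where
  "msub f g = (\<lambda>j i. f j i - g j i)"

definition chain_complex :: "'i gmod \<Rightarrow> ('i \<Rightarrow> 'i \<Rightarrow> 'a::comm_ring_1) \<Rightarrow> bool" where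
  "chain_complex V d \<longleftrightarrow> free_gmod V \<and> graded_map V V (-1) d \<and>
     mcomp (gbasis V) d d = zmat"

definition chain_map :: "'i gmod \<Rightarrow> ('i \<Rightarrow> 'i \<Rightarrow> 'a::comm_ring_1) \<Rightarrow> 'j gmod \<Rightarrow> ('j \<Rightarrow> 'j \<Rightarrow> 'a)
    \<Rightarrow> ('j \<Rightarrow> 'i \<Rightarrow> 'a) \<Rightarrow> bool" where
  "chain_map V d W e f \<longleftrightarrow> graded_map V W 0 f \<and> mcomp (gbasis W) e f = mcomp (gbasis V) f d"

definition is_chain_htpy :: "'i gmod \<Rightarrow> ('i \<Rightarrow> 'i \<Rightarrow> 'a::comm_ring_1) \<Rightarrow> 'j gmod \<Rightarrow> ('j \<Rightarrow> 'j \<Rightarrow> 'a)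
    \<Rightarrow> ('j \<Rightarrow> 'i \<Rightarrow> 'a) \<Rightarrow> ('j \<Rightarrow> 'i \<Rightarrow> 'a) \<Rightarrow> ('j \<Rightarrow> 'i \<Rightarrow> 'a) \<Rightarrow> bool" where
  "is_chain_htpy V d W e f g K \<longleftrightarrow> graded_map V W 1 K \<and>
     madd (mcomp (gbasis W) e K) (mcomp (gbasis V) K d) = msub f g"

definition chain_homotopic :: "'i gmod \<Rightarrow> ('i \<Rightarrow> 'i \<Rightarrow> 'a::comm_ring_1) \<Rightarrow> 'j gmod \<Rightarrow> ('j \<Rightarrow> 'j \<Rightarrow> 'a)
    \<Rightarrow> ('j \<Rightarrow> 'i \<Rightarrow> 'a) \<Rightarrow> ('j \<Rightarrow> 'i \<Rightarrow> 'a) \<Rightarrow> bool" where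
  "chain_homotopic V d W e f g \<longleftrightarrow> (\<exists>K. is_chain_htpy V d W e f g K)"

definition chain_iso :: "'i gmod \<Rightarrow> ('i \<Rightarrow> 'i \<Rightarrow> 'a::comm_ring_1) \<Rightarrow> 'j gmod \<Rightarrow> ('j \<Rightarrow> 'j \<Rightarrow> 'a)
    \<Rightarrow> ('j \<Rightarrow> 'i \<Rightarrow> 'a) \<Rightarrow> bool" where
  "chain_iso V d W e f \<longleftrightarrow> chain_map V d W e f \<and>
     (\<exists>g. chain_map W e V d g \<and> mcomp (gbasis W) g f = mid (gbasis V)
                                \<and> mcomp (gbasis V) f g = mid (gbasis W))"

text \<open>Basis of C + C[-1] + R: Inl (Inl i) for C, Inl (Inr i) for C[-1], Inr k for R.\<close>
definition blk :: "('j \<Rightarrow> 'i \<Rightarrow> 'a) \<Rightarrow> ('j \<Rightarrow> 'i \<Rightarrow> 'a) \<Rightarrow> ('j \<Rightarrow> 'k \<Rightarrow> 'a)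
   \<Rightarrow> ('j \<Rightarrow> 'i \<Rightarrow> 'a) \<Rightarrow> ('j \<Rightarrow> 'i \<Rightarrow> 'a) \<Rightarrow> ('j \<Rightarrow> 'k \<Rightarrow> 'a)
   \<Rightarrow> ('l \<Rightarrow> 'i \<Rightarrow> 'a) \<Rightarrow> ('l \<Rightarrow> 'i \<Rightarrow> 'a) \<Rightarrow> ('l \<Rightarrow> 'k \<Rightarrow> 'a)
   \<Rightarrow> ('j + 'j) + 'l \<Rightarrow> ('i + 'i) + 'k \<Rightarrow> 'a" where
  "blk A11 A12 A13 A21 A22 A23 A31 A32 A33 p q =
     (case p of
        Inl (Inl j) \<Rightarrow> (case q of Inl (Inl i) \<Rightarrow> A11 j i | Inl (Inr i) \<Rightarrow> A12 j i | Inr k \<Rightarrow> A13 j k)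
      | Inl (Inr j) \<Rightarrow> (case q of Inl (Inl i) \<Rightarrow> A21 j i | Inl (Inr i) \<Rightarrow> A22 j i | Inr k \<Rightarrow> A23 j k)
      | Inr l \<Rightarrow> (case q of Inl (Inl i) \<Rightarrow> A31 l i | Inl (Inr i) \<Rightarrow> A32 l i | Inr k \<Rightarrow> A33 l k))"

text \<open>Direct sum C + C[-1] + R; since C[-1]_n = C_(n-1), a basis element of C of
degree n yields a basis element of C[-1] of degree n+1.\<close>
definition dsum3 :: "'i gmod \<Rightarrow> 'k gmod \<Rightarrow> (('i + 'i) + 'k) gmod" where
  "dsum3 C R =
    (Inl ` Inl ` gbasis C \<union> Inl ` Inr ` gbasis C \<union> Inr ` gbasis R,
     (\<lambda>p. case p of Inl (Inl i) \<Rightarrow> gdeg C i | Inl (Inr i) \<Rightarrow> gdeg C i + 1 | Inr k \<Rightarrow> gdeg R k))"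

record ('i, 'k, 'a) scx =
  sC :: "'i gmod"
  sd :: "'i \<Rightarrow> 'i \<Rightarrow> 'a"
  sv :: "'i \<Rightarrow> 'i \<Rightarrow> 'a"
  sR :: "'k gmod"
  sr :: "'k \<Rightarrow> 'k \<Rightarrow> 'a"
  sdel1 :: "'k \<Rightarrow> 'i \<Rightarrow> 'a"
  sdel2 :: "'i \<Rightarrow> 'k \<Rightarrow> 'a"   (* delta_2 : R -> C[-1] *)

definition tot :: "('i, 'k, 'a, 'z) scx_scheme \<Rightarrow> (('i + 'i) + 'k) gmod" where
  "tot X = dsum3 (sC X) (sR X)"

definition tot_diff :: "('i, 'k, 'a::comm_ring_1, 'z) scx_scheme \<Rightarrow> ('i + 'i) + 'k \<Rightarrow> ('i + 'i) + 'k \<Rightarrow> 'a" where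
  "tot_diff X = blk (sd X) zmat zmat
                    (sv X) (mneg (sd X)) (sdel2 X)
                    (sdel1 X) zmat (sr X)"

definition is_scx :: "('i, 'k, 'a::comm_ring_1, 'z) scx_scheme \<Rightarrow> bool" where
  "is_scx X \<longleftrightarrow> free_gmod (sC X) \<and> free_gmod (sR X) \<and>
     mat_on (gbasis (sC X)) (gbasis (sC X)) (sd X) \<and>
     mat_on (gbasis (sC X)) (gbasis (sC X)) (sv X) \<and>
     mat_on (gbasis (sR X)) (gbasis (sR X)) (sr X) \<and>
     mat_on (gbasis (sR X)) (gbasis (sC X)) (sdel1 X) \<and>
     mat_on (gbasis (sC X)) (gbasis (sR X)) (sdel2 X) \<and>
     chain_complex (tot X) (tot_diff X)"

text \<open>Data of a morphism (lambda, mu, Delta_1, Delta_2, rho), and likewise of an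
S-chain homotopy (K, L, M_1, M_2, J).\<close>
record ('i, 'k, 'j, 'l, 'a) smap =
  m11 :: "'j \<Rightarrow> 'i \<Rightarrow> 'a"
  m21 :: "'j \<Rightarrow> 'i \<Rightarrow> 'a"
  m31 :: "'l \<Rightarrow> 'i \<Rightarrow> 'a"
  m23 :: "'j \<Rightarrow> 'k \<Rightarrow> 'a"
  m33 :: "'l \<Rightarrow> 'k \<Rightarrow> 'a"

definition tot_mor :: "('i, 'k, 'j, 'l, 'a::comm_ring_1) smap \<Rightarrow> ('j + 'j) + 'l \<Rightarrow> ('i + 'i) + 'k \<Rightarrow> 'a" where
  "tot_mor F = blk (m11 F) zmat zmat
                   (m21 F) (m11 F) (m23 F)
                   (m31 F) zmat (m33 F)"

definition tot_htpy :: "('i, 'k, 'j, 'l, 'a::comm_ring_1) smap \<Rightarrow> ('j + 'j) + 'l \<Rightarrow> ('i + 'i) + 'k \<Rightarrow> 'a" where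
  "tot_htpy H = blk (m11 H) zmat zmat
                    (m21 H) (mneg (m11 H)) (m23 H)
                    (m31 H) zmat (m33 H)"

definition smap_on :: "('i, 'k, 'a::comm_ring_1, 'z1) scx_scheme \<Rightarrow> ('j, 'l, 'a, 'z2) scx_scheme
    \<Rightarrow> ('i, 'k, 'j, 'l, 'a) smap \<Rightarrow> bool" where
  "smap_on X Y F \<longleftrightarrow>
     mat_on (gbasis (sC Y)) (gbasis (sC X)) (m11 F) \<and>
     mat_on (gbasis (sC Y)) (gbasis (sC X)) (m21 F) \<and>
     mat_on (gbasis (sR Y)) (gbasis (sC X)) (m31 F) \<and>
     mat_on (gbasis (sC Y)) (gbasis (sR X)) (m23 F) \<and>
     mat_on (gbasis (sR Y)) (gbasis (sR X)) (m33 F)"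

definition is_smor :: "('i, 'k, 'a::comm_ring_1, 'z1) scx_scheme \<Rightarrow> ('j, 'l, 'a, 'z2) scx_scheme
    \<Rightarrow> ('i, 'k, 'j, 'l, 'a) smap \<Rightarrow> bool" where
  "is_smor X Y F \<longleftrightarrow> smap_on X Y F \<and>
     chain_map (tot X) (tot_diff X) (tot Y) (tot_diff Y) (tot_mor F)"

definition is_siso :: "('i, 'k, 'a::comm_ring_1, 'z1) scx_scheme \<Rightarrow> ('j, 'l, 'a, 'z2) scx_scheme
    \<Rightarrow> ('i, 'k, 'j, 'l, 'a) smap \<Rightarrow> bool" where
  "is_siso X Y F \<longleftrightarrow> is_smor X Y F \<and>
     (\<exists>G. is_smor Y X G \<and>
          mcomp (gbasis (tot Y)) (tot_mor G) (tot_mor F) = mid (gbasis (tot X)) \<and>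
          mcomp (gbasis (tot X)) (tot_mor F) (tot_mor G) = mid (gbasis (tot Y)))"

definition is_shtpy :: "('i, 'k, 'a::comm_ring_1, 'z1) scx_scheme \<Rightarrow> ('j, 'l, 'a, 'z2) scx_scheme
    \<Rightarrow> ('i, 'k, 'j, 'l, 'a) smap \<Rightarrow> ('i, 'k, 'j, 'l, 'a) smap \<Rightarrow> ('i, 'k, 'j, 'l, 'a) smap \<Rightarrow> bool" where
  "is_shtpy X Y F G H \<longleftrightarrow> smap_on X Y H \<and>
     is_chain_htpy (tot X) (tot_diff X) (tot Y) (tot_diff Y) (tot_mor F) (tot_mor G) (tot_htpy H)"

definition s_homotopic :: "('i, 'k, 'a::comm_ring_1, 'z1) scx_scheme \<Rightarrow> ('j, 'l, 'a, 'z2) scx_scheme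
    \<Rightarrow> ('i, 'k, 'j, 'l, 'a) smap \<Rightarrow> ('i, 'k, 'j, 'l, 'a) smap \<Rightarrow> bool" where
  "s_homotopic X Y F G \<longleftrightarrow> (\<exists>H. is_shtpy X Y F G H)"

end

theory Submission
  imports Defs
begin

text \<open>
Let K and J be chain homotopies from the irreducible and reducible components of F to
isomorphisms f and g. The S-homotopy H with diagonal blocks K, -K, J and zero off-diagonal
blocks gives the morphism G = F - (d' H + H d), which is S-homotopic to F and whose diagonal
blocks are f, f, g. Being block lower triangular with invertible diagonal blocks, G has a
two-sided inverse of the same block shape, and an inverse of a degree 0 chain map is again
one. So G is an S-isomorphism.
\<close>

lemma mcomp_assoc: "mcomp B1 (mcomp B2 f g) h = mcomp B2 f (mcomp B1 g h)"
  unfolding mcomp_def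
  by (simp add: fun_eq_iff sum_distrib_left sum_distrib_right mult.assoc sum.swap[where A=B1])

lemma mcomp_madd_left: "mcomp B (madd f g) h = madd (mcomp B f h) (mcomp B g h)"
  unfolding mcomp_def madd_def by (simp add: fun_eq_iff distrib_right sum.distrib)

lemma mcomp_madd_right: "mcomp B h (madd f g) = madd (mcomp B h f) (mcomp B h g)"
  unfolding mcomp_def madd_def by (simp add: fun_eq_iff distrib_left sum.distrib)

lemma mcomp_msub_left: "mcomp B (msub f g) h = msub (mcomp B f h) (mcomp B g h)"
  unfolding mcomp_def msub_def by (simp add: fun_eq_iff left_diff_distrib sum_subtractf)

lemma mcomp_msub_right: "mcomp B h (msub f g) = msub (mcomp B h f) (mcomp B h g)"
  unfolding mcomp_def msub_def by (simp add: fun_eq_iff right_diff_distrib sum_subtractf)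

lemma mcomp_mneg_left: "mcomp B (mneg f) h = mneg (mcomp B f h)"
  unfolding mcomp_def mneg_def by (simp add: fun_eq_iff sum_negf)

lemma mcomp_mneg_right: "mcomp B h (mneg f) = mneg (mcomp B h f)"
  unfolding mcomp_def mneg_def by (simp add: fun_eq_iff sum_negf)

lemma mcomp_zmat_left [simp]: "mcomp B zmat h = zmat"
  unfolding mcomp_def zmat_def by (simp add: fun_eq_iff)

lemma mcomp_zmat_right [simp]: "mcomp B h zmat = zmat"
  unfolding mcomp_def zmat_def by (simp add: fun_eq_iff)

lemma madd_zmat [simp]:
  fixes f :: "'j \<Rightarrow> 'i \<Rightarrow> 'a::monoid_add"
  shows "madd zmat f = f" "madd f zmat = f"
  unfolding madd_def zmat_def by (simp_all add: fun_eq_iff)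

lemma msub_zmat [simp]:
  fixes f :: "'j \<Rightarrow> 'i \<Rightarrow> 'a::group_add"
  shows "msub f zmat = f" "msub zmat f = mneg f"
  unfolding msub_def zmat_def mneg_def by (simp_all add: fun_eq_iff)

lemma mneg_zmat [simp]: "mneg zmat = (zmat :: 'j \<Rightarrow> 'i \<Rightarrow> 'a::group_add)"
  unfolding mneg_def zmat_def by (simp add: fun_eq_iff)

lemma msub_msub_cancel [simp]: "msub f (msub f g) = (g :: 'j \<Rightarrow> 'i \<Rightarrow> 'a::ab_group_add)"
  unfolding msub_def by (simp add: fun_eq_iff)

lemmas mcomp_distribs =
  mcomp_madd_left mcomp_madd_right mcomp_msub_left mcomp_msub_right mcomp_mneg_left mcomp_mneg_right

lemma mcomp_nonzero_witness: "mcomp B f g k j \<noteq> 0 \<Longrightarrow> \<exists>i\<in>B. f k i \<noteq> 0 \<and> g i j \<noteq> 0"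
  unfolding mcomp_def by (metis (mono_tags, lifting) mult_not_zero sum.neutral)

definition rows_in :: "'j set \<Rightarrow> ('j \<Rightarrow> 'i \<Rightarrow> 'a::zero) \<Rightarrow> bool" where
  "rows_in A f \<longleftrightarrow> (\<forall>j i. f j i \<noteq> 0 \<longrightarrow> j \<in> A)"

definition cols_in :: "'i set \<Rightarrow> ('j \<Rightarrow> 'i \<Rightarrow> 'a::zero) \<Rightarrow> bool" where
  "cols_in A f \<longleftrightarrow> (\<forall>j i. f j i \<noteq> 0 \<longrightarrow> i \<in> A)"

lemma mat_on_iff_rows_cols: "mat_on A B f \<longleftrightarrow> rows_in A f \<and> cols_in B f"
  unfolding mat_on_def rows_in_def cols_in_def by blast

lemma rows_in_mcomp [simp]: "rows_in A f \<Longrightarrow> rows_in A (mcomp B f g)"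
  unfolding rows_in_def by (meson mcomp_nonzero_witness)

lemma cols_in_mcomp [simp]: "cols_in A g \<Longrightarrow> cols_in A (mcomp B f g)"
  unfolding cols_in_def by (meson mcomp_nonzero_witness)

lemma mcomp_mid_left:
  assumes "finite B" "rows_in B f"
  shows "mcomp B (mid B) f = f"
proof -
  have "(\<Sum>i\<in>B. (if i \<in> B \<and> j = i then 1 else 0) * f i k) = (if j \<in> B then f j k else 0)" for j k
  proof -
    have "(\<Sum>i\<in>B. (if i \<in> B \<and> j = i then 1 else 0) * f i k) = (\<Sum>i\<in>B. if j = i then f i k else 0)"
      by (rule sum.cong) auto
    then show ?thesis using assms(1) by simp
  qed
  then show ?thesis
    using assms(2) unfolding mcomp_def mid_def rows_in_def by (auto simp: fun_eq_iff)
qed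

lemma mcomp_mid_right:
  assumes "finite B" "cols_in B f"
  shows "mcomp B f (mid B) = f"
proof -
  have "(\<Sum>i\<in>B. f j i * (if k \<in> B \<and> i = k then 1 else 0)) = (if k \<in> B then f j k else 0)" for j k
  proof -
    have "(\<Sum>i\<in>B. f j i * (if k \<in> B \<and> i = k then 1 else 0)) = (\<Sum>i\<in>B. if k = i then f j i else 0)"
      by (rule sum.cong) auto
    then show ?thesis using assms(1) by simp
  qed
  then show ?thesis
    using assms(2) unfolding mcomp_def mid_def cols_in_def by (auto simp: fun_eq_iff)
qed

lemma mcomp_cancel_left:
  assumes "mcomp B f g = mid B'" "finite B'" "rows_in B' h"
  shows "mcomp B f (mcomp B' g h) = h"
  by (metis assms mcomp_assoc mcomp_mid_left)

lemma mat_on_mcomp: "mat_on A B1 f \<Longrightarrow> mat_on B2 C g \<Longrightarrow> mat_on A C (mcomp B f g)"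
  unfolding mat_on_def by (meson mcomp_nonzero_witness)

lemma nonzero_add_cases: "a + b \<noteq> (0::'a::monoid_add) \<Longrightarrow> a \<noteq> 0 \<or> b \<noteq> 0"
  by auto

lemma nonzero_diff_cases: "a - b \<noteq> (0::'a::group_add) \<Longrightarrow> a \<noteq> 0 \<or> b \<noteq> 0"
  by auto

lemma mat_on_madd: "mat_on A B f \<Longrightarrow> mat_on A B g \<Longrightarrow> mat_on A B (madd f g :: _ \<Rightarrow> _ \<Rightarrow> 'a::monoid_add)"
  unfolding mat_on_def madd_def by (blast dest: nonzero_add_cases)

lemma mat_on_msub: "mat_on A B f \<Longrightarrow> mat_on A B g \<Longrightarrow> mat_on A B (msub f g :: _ \<Rightarrow> _ \<Rightarrow> 'a::group_add)"
  unfolding mat_on_def msub_def by (blast dest: nonzero_diff_cases)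

lemma mat_on_mneg: "mat_on A B f \<Longrightarrow> mat_on A B (mneg f :: _ \<Rightarrow> _ \<Rightarrow> 'a::group_add)"
  unfolding mat_on_def mneg_def by auto

lemma mat_on_zmat [simp]: "mat_on A B zmat"
  unfolding mat_on_def zmat_def by auto

lemmas mat_on_intros = mat_on_msub mat_on_madd mat_on_mcomp mat_on_mneg mat_on_zmat

lemma hom_deg_mcomp:
  "hom_deg dA dB k1 f \<Longrightarrow> hom_deg dB dC k2 g \<Longrightarrow> k = k1 + k2 \<Longrightarrow> hom_deg dA dC k (mcomp B f g)"
  unfolding hom_deg_def by (smt (verit) mcomp_nonzero_witness)

lemma hom_deg_madd:
  "hom_deg dA dB k f \<Longrightarrow> hom_deg dA dB k g \<Longrightarrow> hom_deg dA dB k (madd f g :: _ \<Rightarrow> _ \<Rightarrow> 'a::monoid_add)"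
  unfolding hom_deg_def madd_def by (blast dest: nonzero_add_cases)

lemma hom_deg_msub:
  "hom_deg dA dB k f \<Longrightarrow> hom_deg dA dB k g \<Longrightarrow> hom_deg dA dB k (msub f g :: _ \<Rightarrow> _ \<Rightarrow> 'a::group_add)"
  unfolding hom_deg_def msub_def by (blast dest: nonzero_diff_cases)

lemma hom_deg_zmat [simp]: "hom_deg dA dB k zmat"
  unfolding hom_deg_def zmat_def by auto

definition deg_proj :: "'i set \<Rightarrow> ('i \<Rightarrow> int) \<Rightarrow> int \<Rightarrow> 'i \<Rightarrow> 'i \<Rightarrow> 'a::comm_ring_1" where
  "deg_proj B dg n = (\<lambda>j i. if i \<in> B \<and> j = i \<and> dg i = n then 1 else 0)"

lemma mcomp_deg_proj_left:
  assumes "finite B"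
  shows "mcomp B (deg_proj B dg n) h = (\<lambda>j i. if j \<in> B \<and> dg j = n then h j i else 0)"
proof -
  have "(\<Sum>k\<in>B. (if k \<in> B \<and> j = k \<and> dg k = n then 1 else 0) * h k i)
      = (\<Sum>k\<in>B. if j = k then (if dg k = n then h k i else 0) else 0)" for j i
    by (rule sum.cong) auto
  then show ?thesis using assms unfolding mcomp_def deg_proj_def by (simp add: fun_eq_iff)
qed

lemma mcomp_deg_proj_right:
  assumes "finite B"
  shows "mcomp B h (deg_proj B dg n) = (\<lambda>j i. if i \<in> B \<and> dg i = n then h j i else 0)"
proof -
  have "(\<Sum>k\<in>B. h j k * (if i \<in> B \<and> k = i \<and> dg i = n then 1 else 0))
      = (\<Sum>k\<in>B. if i = k then (if dg i = n \<and> i \<in> B then h j k else 0) else 0)" for j i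
    by (rule sum.cong) auto
  then show ?thesis using assms unfolding mcomp_def deg_proj_def by (simp add: fun_eq_iff)
qed

lemma mat_on_deg_proj: "mat_on B B (deg_proj B dg n)"
  unfolding mat_on_def deg_proj_def by auto

text \<open>This turns the degree 0 condition into a commutation relation, which passes to inverse
matrices just like the chain map identity does.\<close>

lemma hom_deg_0_iff_deg_proj_commute:
  assumes "finite BW" "finite BV" "mat_on BW BV f"
  shows "hom_deg dW dV 0 f \<longleftrightarrow> (\<forall>n. mcomp BW (deg_proj BW dW n) f = mcomp BV f (deg_proj BV dV n))"
  unfolding mcomp_deg_proj_left[OF assms(1)] mcomp_deg_proj_right[OF assms(2)]
  using assms(3) unfolding hom_deg_def mat_on_def fun_eq_iff
  by (smt (verit, best))

lemma mcomp_inverse_intertwine: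
  assumes "finite BV" "finite BW" "rows_in BV x" "cols_in BW y"
    and gf: "mcomp BW g f = mid BV" and fg: "mcomp BV f g = mid BW"
    and comm: "mcomp BW y f = mcomp BV f x"
  shows "mcomp BV x g = mcomp BW g y"
proof -
  have "mcomp BW g y = mcomp BW (mcomp BW g y) (mid BW)"
    using assms(2,4) by (simp add: mcomp_mid_right)
  also have "\<dots> = mcomp BW g (mcomp BV (mcomp BW y f) g)"
    unfolding fg[symmetric] by (simp add: mcomp_assoc)
  also have "\<dots> = mcomp BV (mcomp BW g f) (mcomp BV x g)"
    unfolding comm by (simp add: mcomp_assoc)
  also have "\<dots> = mcomp BV x g"
    using assms(1,3) by (simp add: gf mcomp_mid_left)
  finally show ?thesis ..
qed

lemma chain_map_inverse:
  assumes f: "chain_map V d W e f" and "free_gmod V" "free_gmod W"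
    and d: "mat_on (gbasis V) (gbasis V) d" and e: "mat_on (gbasis W) (gbasis W) e"
    and g: "mat_on (gbasis V) (gbasis W) g"
    and gf: "mcomp (gbasis W) g f = mid (gbasis V)" and fg: "mcomp (gbasis V) f g = mid (gbasis W)"
  shows "chain_map W e V d g"
proof -
  let ?V = "gbasis V" and ?W = "gbasis W"
  have fin: "finite ?V" "finite ?W"
    using assms(2,3) unfolding free_gmod_def by auto
  note intertwine = mcomp_inverse_intertwine[OF fin _ _ gf fg]
  have "mat_on ?W ?V f" "hom_deg (gdeg W) (gdeg V) 0 f"
    using f unfolding chain_map_def graded_map_def by auto
  then have "mcomp ?W (deg_proj ?W (gdeg W) n) f = mcomp ?V f (deg_proj ?V (gdeg V) n)" for n
    using hom_deg_0_iff_deg_proj_commute[OF fin(2,1)] by blast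
  then have "mcomp ?V (deg_proj ?V (gdeg V) n) g = mcomp ?W g (deg_proj ?W (gdeg W) n)" for n
    by (intro intertwine) (meson mat_on_deg_proj mat_on_iff_rows_cols)+
  then have "hom_deg (gdeg V) (gdeg W) 0 g"
    using hom_deg_0_iff_deg_proj_commute[OF fin g] by blast
  moreover have "mcomp ?V d g = mcomp ?W g e"
    using f d e unfolding chain_map_def by (intro intertwine) (simp_all add: mat_on_iff_rows_cols)
  ultimately show ?thesis
    using g unfolding chain_map_def graded_map_def by simp
qed

lemma chain_map_minus_boundary:
  assumes "chain_complex V d" "chain_complex W e" "chain_map V d W e f" "graded_map V W 1 h"
  defines "g \<equiv> msub f (madd (mcomp (gbasis W) e h) (mcomp (gbasis V) h d))"
  shows "chain_map V d W e g" and "is_chain_htpy V d W e f g h"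
proof -
  let ?V = "gbasis V" and ?W = "gbasis W"
  have d: "mat_on ?V ?V d" "hom_deg (gdeg V) (gdeg V) (-1) d" "mcomp ?V d d = zmat"
    and e: "mat_on ?W ?W e" "hom_deg (gdeg W) (gdeg W) (-1) e" "mcomp ?W e e = zmat"
    using assms(1,2) unfolding chain_complex_def graded_map_def by auto
  have f: "mat_on ?W ?V f" "hom_deg (gdeg W) (gdeg V) 0 f" "mcomp ?W e f = mcomp ?V f d"
    and h: "mat_on ?W ?V h" "hom_deg (gdeg W) (gdeg V) 1 h"
    using assms(3,4) unfolding chain_map_def graded_map_def by auto
  have "mat_on ?W ?V g"
    unfolding g_def using d e f h by (blast intro: mat_on_intros)
  moreover have "hom_deg (gdeg W) (gdeg V) 0 g"
    unfolding g_def
    by (intro hom_deg_msub hom_deg_madd f hom_deg_mcomp[OF e(2) h(2)] hom_deg_mcomp[OF h(2) d(2)]) auto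
  moreover have "mcomp ?W e (mcomp ?W e h) = zmat"
    by (simp add: mcomp_assoc[symmetric] e(3))
  then have "mcomp ?W e g = mcomp ?V g d"
    unfolding g_def by (simp add: mcomp_distribs mcomp_assoc d(3) f(3))
  ultimately show "chain_map V d W e g"
    unfolding chain_map_def graded_map_def by simp
  show "is_chain_htpy V d W e f g h"
    using assms(4) unfolding is_chain_htpy_def g_def by simp
qed

definition basis3 :: "'i set \<Rightarrow> 'k set \<Rightarrow> (('i + 'i) + 'k) set" where
  "basis3 B R = Inl ` Inl ` B \<union> Inl ` Inr ` B \<union> Inr ` R"

lemma gbasis_tot: "gbasis (tot X) = basis3 (gbasis (sC X)) (gbasis (sR X))"
  unfolding tot_def dsum3_def gbasis_def basis3_def by simp

lemma sum_basis3:
  assumes "finite B" "finite R"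
  shows "sum h (basis3 B R) = (\<Sum>i\<in>B. h (Inl (Inl i))) + (\<Sum>i\<in>B. h (Inl (Inr i))) + (\<Sum>k\<in>R. h (Inr k))"
proof -
  have "sum h (basis3 B R) = sum h (Inl ` Inl ` B \<union> Inl ` Inr ` B) + sum h (Inr ` R)"
    unfolding basis3_def using assms by (intro sum.union_disjoint) auto
  also have "sum h (Inl ` Inl ` B \<union> Inl ` Inr ` B) = sum h (Inl ` Inl ` B) + sum h (Inl ` Inr ` B)"
    using assms by (intro sum.union_disjoint) auto
  finally show ?thesis
    by (simp add: image_image sum.reindex inj_on_def)
qed

lemma blk_mcomp:
  assumes "finite B" "finite R"
  shows "mcomp (basis3 B R) (blk A11 A12 A13 A21 A22 A23 A31 A32 A33) (blk B11 B12 B13 B21 B22 B23 B31 B32 B33)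
   = blk (madd (madd (mcomp B A11 B11) (mcomp B A12 B21)) (mcomp R A13 B31))
         (madd (madd (mcomp B A11 B12) (mcomp B A12 B22)) (mcomp R A13 B32))
         (madd (madd (mcomp B A11 B13) (mcomp B A12 B23)) (mcomp R A13 B33))
         (madd (madd (mcomp B A21 B11) (mcomp B A22 B21)) (mcomp R A23 B31))
         (madd (madd (mcomp B A21 B12) (mcomp B A22 B22)) (mcomp R A23 B32))
         (madd (madd (mcomp B A21 B13) (mcomp B A22 B23)) (mcomp R A23 B33))
         (madd (madd (mcomp B A31 B11) (mcomp B A32 B21)) (mcomp R A33 B31))
         (madd (madd (mcomp B A31 B12) (mcomp B A32 B22)) (mcomp R A33 B32))
         (madd (madd (mcomp B A31 B13) (mcomp B A32 B23)) (mcomp R A33 B33))"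
  unfolding fun_eq_iff mcomp_def[of "basis3 B R"] sum_basis3[OF assms]
  by (simp add: blk_def madd_def mcomp_def split: sum.split)

lemma blk_madd:
  "madd (blk A11 A12 A13 A21 A22 A23 A31 A32 A33) (blk B11 B12 B13 B21 B22 B23 B31 B32 B33)
   = blk (madd A11 B11) (madd A12 B12) (madd A13 B13) (madd A21 B21) (madd A22 B22) (madd A23 B23)
         (madd A31 B31) (madd A32 B32) (madd A33 B33)"
  by (simp add: fun_eq_iff blk_def madd_def split: sum.split)

lemma blk_msub:
  "msub (blk A11 A12 A13 A21 A22 A23 A31 A32 A33) (blk B11 B12 B13 B21 B22 B23 B31 B32 B33)
   = blk (msub A11 B11) (msub A12 B12) (msub A13 B13) (msub A21 B21) (msub A22 B22) (msub A23 B23)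
         (msub A31 B31) (msub A32 B32) (msub A33 B33)"
  by (simp add: fun_eq_iff blk_def msub_def split: sum.split)

lemma blk_eq_iff:
  "blk A11 A12 A13 A21 A22 A23 A31 A32 A33 = blk B11 B12 B13 B21 B22 B23 B31 B32 B33 \<longleftrightarrow>
   A11 = B11 \<and> A12 = B12 \<and> A13 = B13 \<and> A21 = B21 \<and> A22 = B22 \<and> A23 = B23 \<and>
   A31 = B31 \<and> A32 = B32 \<and> A33 = B33"
  (is "?lhs \<longleftrightarrow> ?rhs")
proof
  assume ?lhs
  then have e: "blk A11 A12 A13 A21 A22 A23 A31 A32 A33 p q = blk B11 B12 B13 B21 B22 B23 B31 B32 B33 p q"
    for p q
    by simp
  show ?rhs
    unfolding fun_eq_iff
    using e[of "Inl (Inl _)" "Inl (Inl _)"] e[of "Inl (Inl _)" "Inl (Inr _)"] e[of "Inl (Inl _)" "Inr _"]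
      e[of "Inl (Inr _)" "Inl (Inl _)"] e[of "Inl (Inr _)" "Inl (Inr _)"] e[of "Inl (Inr _)" "Inr _"]
      e[of "Inr _" "Inl (Inl _)"] e[of "Inr _" "Inl (Inr _)"] e[of "Inr _" "Inr _"]
    by (simp add: blk_def)
qed simp

lemma mid_basis3: "mid (basis3 B R) = blk (mid B) zmat zmat zmat (mid B) zmat zmat zmat (mid R)"
  by (auto simp: fun_eq_iff blk_def mid_def zmat_def basis3_def split: sum.split)

lemma mat_on_blk:
  assumes "mat_on B' B A11" "mat_on B' B A12" "mat_on B' R A13"
    "mat_on B' B A21" "mat_on B' B A22" "mat_on B' R A23"
    "mat_on R' B A31" "mat_on R' B A32" "mat_on R' R A33"
  shows "mat_on (basis3 B' R') (basis3 B R) (blk A11 A12 A13 A21 A22 A23 A31 A32 A33)"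
  using assms unfolding mat_on_def basis3_def blk_def by (auto split: sum.split)

lemmas blk_simps = blk_mcomp blk_madd blk_msub blk_eq_iff mcomp_mneg_left mcomp_mneg_right

lemma is_scx_finite_bases:
  assumes "is_scx X"
  shows "finite (gbasis (sC X))" "finite (gbasis (sR X))"
  using assms unfolding is_scx_def free_gmod_def by auto

definition smap_sub :: "('i, 'k, 'j, 'l, 'a::minus) smap \<Rightarrow> ('i, 'k, 'j, 'l, 'a) smap
    \<Rightarrow> ('i, 'k, 'j, 'l, 'a) smap" where
  "smap_sub F E = \<lparr>m11 = msub (m11 F) (m11 E), m21 = msub (m21 F) (m21 E),
     m31 = msub (m31 F) (m31 E), m23 = msub (m23 F) (m23 E), m33 = msub (m33 F) (m33 E)\<rparr>"

text \<open>The blocks of d' H + H d for an S-homotopy H = (K, L, M1, M2, J). Its (2,2) block equals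
its (1,1) block, so it has the shape of an S-morphism.\<close>

definition htpy_boundary :: "('i, 'k, 'a::comm_ring_1, 'z1) scx_scheme \<Rightarrow> ('j, 'l, 'a, 'z2) scx_scheme
    \<Rightarrow> ('i, 'k, 'j, 'l, 'a) smap \<Rightarrow> ('i, 'k, 'j, 'l, 'a) smap" where
  "htpy_boundary X Y H =
     \<lparr>m11 = madd (mcomp (gbasis (sC Y)) (sd Y) (m11 H)) (mcomp (gbasis (sC X)) (m11 H) (sd X)),
      m21 = madd (msub (madd (mcomp (gbasis (sC Y)) (sv Y) (m11 H)) (mcomp (gbasis (sR Y)) (sdel2 Y) (m31 H)))
                       (mcomp (gbasis (sC Y)) (sd Y) (m21 H)))
                 (msub (madd (mcomp (gbasis (sC X)) (m21 H) (sd X)) (mcomp (gbasis (sR X)) (m23 H) (sdel1 X)))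
                       (mcomp (gbasis (sC X)) (m11 H) (sv X))),
      m31 = madd (madd (mcomp (gbasis (sC Y)) (sdel1 Y) (m11 H)) (mcomp (gbasis (sR Y)) (sr Y) (m31 H)))
                 (madd (mcomp (gbasis (sC X)) (m31 H) (sd X)) (mcomp (gbasis (sR X)) (m33 H) (sdel1 X))),
      m23 = madd (msub (mcomp (gbasis (sR Y)) (sdel2 Y) (m33 H)) (mcomp (gbasis (sC Y)) (sd Y) (m23 H)))
                 (msub (mcomp (gbasis (sR X)) (m23 H) (sr X)) (mcomp (gbasis (sC X)) (m11 H) (sdel2 X))),
      m33 = madd (mcomp (gbasis (sR Y)) (sr Y) (m33 H)) (mcomp (gbasis (sR X)) (m33 H) (sr X))\<rparr>"

lemma tot_mor_smap_sub: "tot_mor (smap_sub F E) = msub (tot_mor F) (tot_mor E)"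
  unfolding tot_mor_def smap_sub_def by (simp add: blk_msub)

lemma tot_mor_htpy_boundary:
  assumes "is_scx X" "is_scx Y"
  shows "madd (mcomp (gbasis (tot Y)) (tot_diff Y) (tot_htpy H)) (mcomp (gbasis (tot X)) (tot_htpy H) (tot_diff X))
    = tot_mor (htpy_boundary X Y H)"
  unfolding tot_diff_def tot_htpy_def tot_mor_def htpy_boundary_def gbasis_tot
  using is_scx_finite_bases[OF assms(1)] is_scx_finite_bases[OF assms(2)]
  by (simp add: blk_simps) (simp add: fun_eq_iff madd_def msub_def mneg_def algebra_simps)

lemma mat_on_tot_mor:
  "smap_on X Y F \<Longrightarrow> mat_on (gbasis (tot Y)) (gbasis (tot X)) (tot_mor F)"
  unfolding smap_on_def tot_mor_def gbasis_tot by (intro mat_on_blk) auto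

lemma mat_on_tot_htpy:
  "smap_on X Y H \<Longrightarrow> mat_on (gbasis (tot Y)) (gbasis (tot X)) (tot_htpy H)"
  unfolding smap_on_def tot_htpy_def gbasis_tot by (intro mat_on_blk) (auto intro: mat_on_mneg)

lemma smap_on_smap_sub: "smap_on X Y F \<Longrightarrow> smap_on X Y E \<Longrightarrow> smap_on X Y (smap_sub F E)"
  unfolding smap_on_def smap_sub_def by (simp add: mat_on_msub)

lemma smap_on_htpy_boundary:
  assumes "is_scx X" "is_scx Y" "smap_on X Y H"
  shows "smap_on X Y (htpy_boundary X Y H)"
  using assms unfolding is_scx_def smap_on_def htpy_boundary_def
  by (auto intro!: mat_on_madd mat_on_msub intro: mat_on_mcomp)

lemma hom_deg_tot_htpy:
  assumes "hom_deg (gdeg (sC Y)) (gdeg (sC X)) 1 (m11 H)" "hom_deg (gdeg (sC Y)) (gdeg (sC X)) 0 (m21 H)"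
    "hom_deg (gdeg (sR Y)) (gdeg (sC X)) 1 (m31 H)" "hom_deg (gdeg (sC Y)) (gdeg (sR X)) 0 (m23 H)"
    "hom_deg (gdeg (sR Y)) (gdeg (sR X)) 1 (m33 H)"
  shows "hom_deg (gdeg (tot Y)) (gdeg (tot X)) 1 (tot_htpy H)"
  using assms unfolding hom_deg_def tot_htpy_def tot_def dsum3_def gdeg_def blk_def zmat_def mneg_def
  by (auto split: sum.split)

lemma is_smor_minus_htpy_boundary:
  assumes X: "is_scx X" and Y: "is_scx Y" and F: "is_smor X Y F"
    and H: "smap_on X Y H" "hom_deg (gdeg (tot Y)) (gdeg (tot X)) 1 (tot_htpy H)"
  shows "is_smor X Y (smap_sub F (htpy_boundary X Y H))"
    and "is_shtpy X Y F (smap_sub F (htpy_boundary X Y H)) H"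
proof -
  have "chain_complex (tot X) (tot_diff X)" "chain_complex (tot Y) (tot_diff Y)"
    using X Y unfolding is_scx_def by auto
  moreover have "chain_map (tot X) (tot_diff X) (tot Y) (tot_diff Y) (tot_mor F)"
    using F unfolding is_smor_def by simp
  moreover have "graded_map (tot X) (tot Y) 1 (tot_htpy H)"
    using H mat_on_tot_htpy unfolding graded_map_def by blast
  ultimately have "chain_map (tot X) (tot_diff X) (tot Y) (tot_diff Y) (tot_mor (smap_sub F (htpy_boundary X Y H)))"
    and "is_chain_htpy (tot X) (tot_diff X) (tot Y) (tot_diff Y) (tot_mor F)
           (tot_mor (smap_sub F (htpy_boundary X Y H))) (tot_htpy H)"
    unfolding tot_mor_smap_sub tot_mor_htpy_boundary[OF X Y, symmetric]
    by (rule chain_map_minus_boundary)+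
  moreover have "smap_on X Y (smap_sub F (htpy_boundary X Y H))"
    using F X Y H(1) unfolding is_smor_def by (blast intro: smap_on_smap_sub smap_on_htpy_boundary)
  ultimately show "is_smor X Y (smap_sub F (htpy_boundary X Y H))"
    and "is_shtpy X Y F (smap_sub F (htpy_boundary X Y H)) H"
    using H(1) unfolding is_smor_def is_shtpy_def by auto
qed

lemma blk_lower_triangular_inverse:
  fixes f :: "'j \<Rightarrow> 'i \<Rightarrow> 'a::comm_ring_1"
  assumes fin: "finite B" "finite B'" "finite R" "finite R'"
    and A: "mat_on B' B A21" "mat_on B' R A23" "mat_on R' B A31"
    and inv: "mat_on B B' fi" "mat_on R R' gi"
      "mcomp B' fi f = mid B" "mcomp B f fi = mid B'" "mcomp R' gi g = mid R" "mcomp R g gi = mid R'"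
  obtains a b c where "mat_on B B' a" "mat_on B R' b" "mat_on R B' c"
    "mcomp (basis3 B' R') (blk fi zmat zmat a fi b c zmat gi) (blk f zmat zmat A21 f A23 A31 zmat g)
       = mid (basis3 B R)"
    "mcomp (basis3 B R) (blk f zmat zmat A21 f A23 A31 zmat g) (blk fi zmat zmat a fi b c zmat gi)
       = mid (basis3 B' R')"
proof
  \<comment> \<open>b and c are forced by the (2,3) and (3,1) blocks of the product being zero, then a by
    the (2,1) block.\<close>
  define b where "b = mneg (mcomp B' fi (mcomp R A23 gi))"
  define c where "c = mneg (mcomp R' gi (mcomp B A31 fi))"
  define a where "a = mneg (mcomp B (madd (mcomp B' fi A21) (mcomp R' b A31)) fi)"
  show "mat_on B B' a" "mat_on B R' b" "mat_on R B' c"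
    unfolding a_def b_def c_def using A inv(1,2) by (blast intro: mat_on_intros)+
  show "mcomp (basis3 B' R') (blk fi zmat zmat a fi b c zmat gi) (blk f zmat zmat A21 f A23 A31 zmat g)
       = mid (basis3 B R)"
    "mcomp (basis3 B R) (blk f zmat zmat A21 f A23 A31 zmat g) (blk fi zmat zmat a fi b c zmat gi)
       = mid (basis3 B' R')"
    unfolding a_def b_def c_def
    using A[unfolded mat_on_iff_rows_cols]
    by (simp_all add: blk_simps mcomp_distribs mcomp_assoc mid_basis3 fin inv
        mcomp_cancel_left[OF inv(4)] mcomp_cancel_left[OF inv(6)] mcomp_mid_right)
      (simp_all add: fun_eq_iff madd_def msub_def mneg_def zmat_def)
qed

lemma is_siso_if_components_iso:
  assumes X: "is_scx X" and Y: "is_scx Y" and G: "is_smor X Y G"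
    and "chain_iso (sC X) (sd X) (sC Y) (sd Y) (m11 G)"
    and "chain_iso (sR X) (sr X) (sR Y) (sr Y) (m33 G)"
  shows "is_siso X Y G"
proof -
  let ?BC = "gbasis (sC X)" and ?BR = "gbasis (sR X)" and ?BC' = "gbasis (sC Y)" and ?BR' = "gbasis (sR Y)"
  obtain fi gi where fi: "mat_on ?BC ?BC' fi" "mcomp ?BC' fi (m11 G) = mid ?BC" "mcomp ?BC (m11 G) fi = mid ?BC'"
    and gi: "mat_on ?BR ?BR' gi" "mcomp ?BR' gi (m33 G) = mid ?BR" "mcomp ?BR (m33 G) gi = mid ?BR'"
    using assms(4,5) unfolding chain_iso_def chain_map_def graded_map_def by blast
  have "mat_on ?BC' ?BC (m21 G)" "mat_on ?BC' ?BR (m23 G)" "mat_on ?BR' ?BC (m31 G)"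
    using G unfolding is_smor_def smap_on_def by auto
  then obtain a b c where abc: "mat_on ?BC ?BC' a" "mat_on ?BC ?BR' b" "mat_on ?BR ?BC' c"
    and inverse:
      "mcomp (basis3 ?BC' ?BR') (blk fi zmat zmat a fi b c zmat gi) (tot_mor G) = mid (basis3 ?BC ?BR)"
      "mcomp (basis3 ?BC ?BR) (tot_mor G) (blk fi zmat zmat a fi b c zmat gi) = mid (basis3 ?BC' ?BR')"
    unfolding tot_mor_def
    using blk_lower_triangular_inverse[OF is_scx_finite_bases(1)[OF X] is_scx_finite_bases(1)[OF Y]
        is_scx_finite_bases(2)[OF X] is_scx_finite_bases(2)[OF Y] _ _ _ fi(1) gi(1) fi(2,3) gi(2,3)]
    by blast
  define Gi where "Gi = \<lparr>m11 = fi, m21 = a, m31 = c, m23 = b, m33 = gi\<rparr>"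
  have Gi: "smap_on Y X Gi"
    unfolding Gi_def smap_on_def using fi(1) gi(1) abc by simp
  have inverse: "mcomp (gbasis (tot Y)) (tot_mor Gi) (tot_mor G) = mid (gbasis (tot X))"
      "mcomp (gbasis (tot X)) (tot_mor G) (tot_mor Gi) = mid (gbasis (tot Y))"
    using inverse unfolding gbasis_tot Gi_def by (simp_all add: tot_mor_def)
  have "chain_complex (tot X) (tot_diff X)" "chain_complex (tot Y) (tot_diff Y)"
    using X Y unfolding is_scx_def by auto
  then have "chain_map (tot Y) (tot_diff Y) (tot X) (tot_diff X) (tot_mor Gi)"
    using G mat_on_tot_mor[OF Gi] inverse unfolding is_smor_def chain_complex_def graded_map_def
    by (intro chain_map_inverse[of "tot X" _ "tot Y"]) auto
  then show ?thesis
    using G Gi inverse unfolding is_siso_def is_smor_def by blast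
qed

theorem lemma2p3:
  fixes X :: "('i, 'k, 'a::comm_ring_1) scx" and Y :: "('j, 'l, 'a) scx"
    and F :: "('i, 'k, 'j, 'l, 'a) smap"
  assumes "is_scx X" and "is_scx Y" and "is_smor X Y F"
    and "\<exists>f. chain_iso (sC X) (sd X) (sC Y) (sd Y) f \<and>
             chain_homotopic (sC X) (sd X) (sC Y) (sd Y) (m11 F) f"
    and "\<exists>g. chain_iso (sR X) (sr X) (sR Y) (sr Y) g \<and>
             chain_homotopic (sR X) (sr X) (sR Y) (sr Y) (m33 F) g"
  shows "\<exists>G. is_siso X Y G \<and> s_homotopic X Y F G"
proof -
  obtain f K where f: "chain_iso (sC X) (sd X) (sC Y) (sd Y) f"
    and K: "is_chain_htpy (sC X) (sd X) (sC Y) (sd Y) (m11 F) f K"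
    using assms(4) unfolding chain_homotopic_def by blast
  obtain g J where g: "chain_iso (sR X) (sr X) (sR Y) (sr Y) g"
    and J: "is_chain_htpy (sR X) (sr X) (sR Y) (sr Y) (m33 F) g J"
    using assms(5) unfolding chain_homotopic_def by blast
  define H :: "('i, 'k, 'j, 'l, 'a) smap" where "H = \<lparr>m11 = K, m21 = zmat, m31 = zmat, m23 = zmat, m33 = J\<rparr>"
  define G where "G = smap_sub F (htpy_boundary X Y H)"
  have "smap_on X Y H" "hom_deg (gdeg (tot Y)) (gdeg (tot X)) 1 (tot_htpy H)"
    using K J unfolding H_def smap_on_def is_chain_htpy_def graded_map_def
    by (auto intro: hom_deg_tot_htpy)
  then have "is_smor X Y G" "is_shtpy X Y F G H"
    unfolding G_def using assms(1-3) by (blast intro: is_smor_minus_htpy_boundary)+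
  moreover have "m11 G = f" "m33 G = g"
    using K J unfolding G_def H_def smap_sub_def htpy_boundary_def is_chain_htpy_def by simp_all
  ultimately have "is_siso X Y G" "s_homotopic X Y F G"
    using assms(1,2) f g unfolding s_homotopic_def by (auto intro: is_siso_if_components_iso)
  then show ?thesis by blast
qed

end
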